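(* Consider the real ODE system $$\frac{dp}{dt}=p\,(pR(v_c)-1),\qquad \frac{dv_c}{dt}=-\frac{p}{4}(1+v_c^2),\qquad R(v)=\frac12\left(\frac1v-v\right).$$ Let $0<v_c(0)<1$ and $0<\rho<R(v_c(0))$, and suppose $p(0)>\frac{1}{R(v_c(0))-\rho}$. Then for all $t>0$ in the existence interval, $v_c(t)<v_c(0)$, $p(t)>\frac{1}{R(v_c(t))-\rho}$, and $p(t)\ge\frac{p(0)}{1-\rho p(0)t}$. Consequently $p(t)\to\infty$ at some finite time $t_c\le\frac{1}{\rho p(0)}$, and the quantities $N_2(t)^2=2\pi p(t)^2\left(\frac{1}{v_c(t)}+v_c(t)\right)$ and $N_0(t)=2|p(t)|\max\!\left(\frac{1}{v_c(t)},v_c(t)\right)$ tend to $\infty$ as $t\to t_c^-$.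
   Context: This system is the form, with dissipation coefficient normalized to $\nu=1$, of the pole-dynamics ODEs for the generalized Constantin–Lax–Majda equation with $a=1/2$, $\sigma=0$, written in the variable $p=\omega_{-2,i}/(v_c(1-v_c^2))$. The quantities $N_2$ and $N_0$ equal the $L^2(-\pi,\pi)$ norm and the Wiener norm, respectively, of the associated periodic solution $\omega(\cdot,t)$. *)

theory Defs
  imports Complex_Main "HOL-Library.Extended_Real"
begin

definition R :: "real \<Rightarrow> real" where
  "R v = (1/v - v) / 2"

definition tdom :: "ereal \<Rightarrow> real set" where
  "tdom T = {t. 0 \<le> t \<and> ereal t < T}"

definition is_sol :: "(real \<Rightarrow> real) \<Rightarrow> (real \<Rightarrow> real) \<Rightarrow> ereal \<Rightarrow> bool" where
  "is_sol p v T \<longleftrightarrow> 0 < T \<and>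
     (\<forall>t\<in>tdom T. v t \<noteq> 0 \<and>
        (p has_real_derivative (p t * (p t * R (v t) - 1))) (at t within tdom T) \<and>
        (v has_real_derivative (- (p t / 4) * (1 + (v t)^2))) (at t within tdom T))"

definition is_maximal_sol :: "(real \<Rightarrow> real) \<Rightarrow> (real \<Rightarrow> real) \<Rightarrow> ereal \<Rightarrow> bool" where
  "is_maximal_sol p v T \<longleftrightarrow> is_sol p v T \<and>
     (\<forall>p' v' T'. is_sol p' v' T' \<and> (\<forall>t\<in>tdom T. p' t = p t \<and> v' t = v t) \<longrightarrow> T' \<le> T)"

definition N2sq :: "real \<Rightarrow> real \<Rightarrow> real" where
  "N2sq p v = 2 * pi * p^2 * (1/v + v)"

definition N0 :: "real \<Rightarrow> real \<Rightarrow> real" where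
  "N0 p v = 2 * \<bar>p\<bar> * max (1/v) v"

end

theory Submission
  imports Defs "HOL-Complex_Analysis.Conformal_Mappings"
begin

text \<open>
  The region where v > 0, p > 0 and 1/p < R(v) - \<rho> is invariant: inside it p increases and
  v decreases, so R(v) - \<rho> - 1/p can only grow. There the derivative of \<rho> t + 1/p is
  \<rho> - (R(v) - 1/p) < 0, which gives p(t) \<ge> p(0) / (1 - \<rho> p(0) t) and forces T \<le> 1/(\<rho> p(0)).

  To see that p blows up at T, use the first integral 4 p v^2 / (1 + v^2)^2 - \<kappa>(v): along
  the orbit p is a function of v, so v alone solves an autonomous equation v' = -g(v) with
  g > 0. If v stayed away from 0 up to T, inverting the time function \<integral> dv / g(v) would
  continue the solution past T, contradicting maximality. Hence v \<rightarrow> 0, and then the first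
  integral gives p \<ge> C / (4 v^2) \<rightarrow> \<infinity>; N2sq and N0 dominate p.
\<close>

lemma real_interval_induct:
  fixes a b :: real and P :: "real \<Rightarrow> bool"
  assumes "a \<le> b"
    and closed: "\<And>m. a \<le> m \<Longrightarrow> m \<le> b \<Longrightarrow> (\<And>s. a \<le> s \<Longrightarrow> s < m \<Longrightarrow> P s) \<Longrightarrow> P m"
    and extend: "\<And>m. a \<le> m \<Longrightarrow> m < b \<Longrightarrow> P m \<Longrightarrow> \<exists>d>0. \<forall>s. m < s \<and> s < m + d \<and> s \<le> b \<longrightarrow> P s"
  shows "P b"
proof (rule ccontr)
  assume "\<not> P b"
  define B where "B = {s. a \<le> s \<and> s \<le> b \<and> \<not> P s}"
  define m where "m = Inf B"
  have bB: "b \<in> B" and bdd: "bdd_below B"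
    using \<open>\<not> P b\<close> \<open>a \<le> b\<close> by (auto simp: B_def bdd_below_def)
  have m: "a \<le> m" "m \<le> b"
    unfolding m_def using bB bdd by (auto intro!: cInf_greatest cInf_lower simp: B_def)
  have below: "P s" if "a \<le> s" "s < m" for s
    using cInf_lower[of s B, OF _ bdd] that m by (force simp: B_def m_def)
  have "P m" by (rule closed[OF m below])
  with \<open>\<not> P b\<close> m have "m < b" by (cases "m = b") auto
  then obtain d where d: "d > 0" "\<forall>s. m < s \<and> s < m + d \<and> s \<le> b \<longrightarrow> P s"
    using extend m \<open>P m\<close> by blast
  obtain s where "s \<in> B" "s < m + d"
    using cInf_less_iff[of B "m + d"] bB bdd d(1) by (auto simp: m_def)
  moreover have "m \<le> s" using \<open>s \<in> B\<close> bdd by (simp add: m_def cInf_lower)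
  ultimately show False
    using d(2) \<open>P m\<close> by (cases "s = m") (auto simp: B_def)
qed

lemma antimono_tendsto_Inf_at_left:
  fixes f :: "real \<Rightarrow> real"
  assumes "a < b"
    and anti: "\<And>s t. a \<le> s \<Longrightarrow> s \<le> t \<Longrightarrow> t < b \<Longrightarrow> f t \<le> f s"
    and bdd: "bdd_below (f ` {a..<b})"
  shows "(f \<longlongrightarrow> Inf (f ` {a..<b})) (at_left b)"
proof (rule order_tendstoI)
  fix y assume y: "y < Inf (f ` {a..<b})"
  show "eventually (\<lambda>s. y < f s) (at_left b)"
    using eventually_at_left_real[OF \<open>a < b\<close>]
  proof eventually_elim
    case (elim s)
    then have "Inf (f ` {a..<b}) \<le> f s" by (intro cInf_lower[OF _ bdd]) auto
    then show ?case using y by linarith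
  qed
next
  fix y assume "Inf (f ` {a..<b}) < y"
  then obtain s where s: "s \<in> {a..<b}" "f s < y"
    using cInf_less_iff[OF _ bdd] \<open>a < b\<close> by auto
  have "s < b" using s by simp
  show "eventually (\<lambda>t. f t < y) (at_left b)"
    using eventually_at_left_real[OF \<open>s < b\<close>]
  proof eventually_elim
    case (elim t)
    then have "f t \<le> f s" using s(1) by (intro anti) auto
    then show ?case using s(2) by simp
  qed
qed

lemma integral_has_real_derivative_interior:
  assumes "continuous_on {a..b} h" "x \<in> {a<..<b}"
  shows "((\<lambda>x. integral {a..x} h) has_real_derivative h x) (at x)"
  using integral_has_real_derivative[OF assms(1), of x] assms(2)
    at_within_Icc_at[of a x b] by auto

lemma strict_mono_on_integral:
  fixes h :: "real \<Rightarrow> real"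
  assumes cont: "continuous_on {a..b} h" and pos: "\<And>x. x \<in> {a..b} \<Longrightarrow> 0 < h x"
  shows "strict_mono_on {a..b} (\<lambda>x. integral {a..x} h)"
proof (rule strict_mono_onI)
  fix x y assume xy: "x \<in> {a..b}" "y \<in> {a..b}" "x < y"
  show "integral {a..x} h < integral {a..y} h"
  proof (rule DERIV_pos_imp_increasing_open[OF \<open>x < y\<close>])
    fix z assume "x < z" "z < y"
    with xy have z: "z \<in> {a<..<b}" by auto
    show "\<exists>d. ((\<lambda>x. integral {a..x} h) has_real_derivative d) (at z) \<and> 0 < d"
      using integral_has_real_derivative_interior[OF cont z] pos[of z] z by auto
  next
    have "continuous_on {a..b} (\<lambda>x. integral {a..x} h)"
      by (rule indefinite_integral_continuous_1[OF integrable_continuous_real[OF cont]])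
    then show "continuous_on {x..y} (\<lambda>x. integral {a..x} h)"
      by (rule continuous_on_subset) (use xy in auto)
  qed
qed

lemma inv_into_has_real_derivative:
  fixes f :: "real \<Rightarrow> real"
  assumes "a \<le> b" and cont: "continuous_on {a..b} f" and mono: "strict_mono_on {a..b} f"
    and deriv: "\<And>x. x \<in> {a<..<b} \<Longrightarrow> (f has_real_derivative f' x) (at x)"
    and nz: "\<And>x. x \<in> {a<..<b} \<Longrightarrow> f' x \<noteq> 0"
    and y: "y \<in> {f a<..<f b}"
  defines "g \<equiv> inv_into {a<..<b} f"
  shows "g y \<in> {a<..<b}" "f (g y) = y" "(g has_real_derivative inverse (f' (g y))) (at y)"
proof -
  obtain x where x: "a \<le> x" "x \<le> b" "f x = y"
    using IVT'[of f a y b] y \<open>a \<le> b\<close> cont by auto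
  with y have "x \<in> {a<..<b}" by (cases "x = a \<or> x = b") auto
  with x have y_img: "y \<in> f ` {a<..<b}" by blast
  show gy: "g y \<in> {a<..<b}" "f (g y) = y"
    unfolding g_def using inv_into_into[OF y_img] f_inv_into_f[OF y_img] by blast+
  have inj: "inj_on f {a<..<b}"
    by (rule strict_mono_on_imp_inj_on[OF monotone_on_subset[OF mono]]) auto
  show "(g has_real_derivative inverse (f' (g y))) (at y)"
  proof (rule has_field_derivative_inverse_strong_x[where S = "{a<..<b}"])
    show "(f has_real_derivative f' (g y)) (at (g y))" "f' (g y) \<noteq> 0"
      using deriv nz gy(1) by blast+
    show "continuous_on {a<..<b} f"
      using cont by (rule continuous_on_subset) auto
    show "g (f z) = z" if "z \<in> {a<..<b}" for z
      using inj that by (simp add: g_def)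
  qed (use gy in auto)
qed

text \<open>The primitive of 16 x^2 / (1 + x^2)^3 vanishing at 0; this derivative is what makes
  first_integral constant along the flow.\<close>

definition kappa :: "real \<Rightarrow> real" where
  "kappa x = 2 * arctan x - 2 * x * (1 - x^2) / (1 + x^2)^2"

lemma one_plus_square_pos: "0 < 1 + (x::real)^2"
  by (simp add: add_pos_nonneg)

lemma kappa_has_real_derivative: "(kappa has_real_derivative 16 * x^2 / (1 + x^2)^3) (at x)"
  using one_plus_square_pos[of x] unfolding kappa_def
  by (auto intro!: derivative_eq_intros) (simp add: divide_simps, algebra)

lemma kappa_nonneg:
  assumes "0 \<le> x" shows "0 \<le> kappa x"
proof -
  have "kappa 0 \<le> kappa x"
  proof (rule DERIV_nonneg_imp_increasing_open[of 0 x])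
    fix y
    show "\<exists>D. (kappa has_real_derivative D) (at y) \<and> 0 \<le> D"
      using kappa_has_real_derivative one_plus_square_pos[of y] by (intro exI conjI) auto
  qed (use assms in \<open>auto intro: DERIV_isCont continuous_at_imp_continuous_on kappa_has_real_derivative\<close>)
  then show ?thesis by (simp add: kappa_def)
qed

lemma kappa_less:
  assumes "0 < x" "x < 1" shows "kappa x < 8 * x^3 / (1 + x^2)^2"
proof -
  define d where "d y = 8 * y^3 / (1 + y^2)^2 - kappa y" for y
  have d_deriv: "(d has_real_derivative 8 * y^2 * (1 - y^2) / (1 + y^2)^3) (at y)" for y
    using one_plus_square_pos[of y] unfolding d_def
    by (auto intro!: derivative_eq_intros kappa_has_real_derivative) (simp add: divide_simps, algebra)
  have "d 0 < d x"
  proof (rule DERIV_pos_imp_increasing_open[OF assms(1)])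
    fix y assume "0 < y" "y < x"
    then have "0 < 8 * y^2 * (1 - y^2) / (1 + y^2)^3"
      using assms one_plus_square_pos[of y] by (simp add: power_less_one_iff)
    then show "\<exists>D. (d has_real_derivative D) (at y) \<and> 0 < D" using d_deriv by blast
  qed (meson d_deriv DERIV_isCont continuous_at_imp_continuous_on)
  then show ?thesis by (simp add: d_def kappa_def)
qed

definition first_integral :: "real \<Rightarrow> real \<Rightarrow> real" where
  "first_integral p v = 4 * p * v^2 / (1 + v^2)^2 - kappa v"

definition level_p :: "real \<Rightarrow> real \<Rightarrow> real" where
  "level_p c v = (c + kappa v) * (1 + v^2)^2 / (4 * v^2)"

lemma level_p_first_integral:
  assumes "v \<noteq> 0" shows "level_p (first_integral p v) v = p"
  using assms one_plus_square_pos[of v]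
  by (simp add: level_p_def first_integral_def divide_simps)

lemma first_integral_deriv_zero:
  fixes p v :: "real \<Rightarrow> real"
  assumes "v t \<noteq> 0"
    and "(p has_real_derivative p t * (p t * R (v t) - 1)) (at t within S)"
    and "(v has_real_derivative - (p t / 4) * (1 + (v t)^2)) (at t within S)"
  shows "((\<lambda>s. first_integral (p s) (v s)) has_real_derivative 0) (at t within S)"
  using assms one_plus_square_pos[of "v t"] unfolding first_integral_def
  by (auto intro!: derivative_eq_intros DERIV_chain2[OF kappa_has_real_derivative])
    (simp add: R_def divide_simps, algebra)

lemma level_p_has_real_derivative:
  assumes "v \<noteq> 0"
  shows "(level_p c has_real_derivative -4 * (level_p c v * R v - 1) / (1 + v^2)) (at v)"
  using assms one_plus_square_pos[of v] unfolding level_p_def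
  by (auto intro!: derivative_eq_intros kappa_has_real_derivative) (simp add: R_def divide_simps, algebra)

lemma level_p_ge:
  assumes "0 \<le> c" "0 < x" shows "c / (4 * x^2) \<le> level_p c x"
proof -
  have "c \<le> c * (1 + x^2)^2"
    using assms(1) by (simp add: mult_le_cancel_left1 one_le_power)
  also have "\<dots> \<le> (c + kappa x) * (1 + x^2)^2"
    using kappa_nonneg[of x] assms by (intro mult_right_mono) auto
  finally show ?thesis
    using assms(2) unfolding level_p_def by (intro divide_right_mono) auto
qed

lemma level_p_pos:
  assumes "0 < c" "0 < x" shows "0 < level_p c x"
proof -
  have "0 < c / (4 * x^2)" using assms by simp
  with level_p_ge[of c x] assms show ?thesis by linarith
qed

lemma R_antimono: "0 < a \<Longrightarrow> a \<le> b \<Longrightarrow> R b \<le> R a"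
  using frac_le[of 1 1 a b] unfolding R_def by simp

lemma one_le_max_inverse:
  fixes v :: real assumes "0 < v" shows "1 \<le> max (1 / v) v"
proof (cases "v < 1")
  case True
  then have "1 < 1 / v" using assms by (simp add: less_divide_eq_1)
  then show ?thesis by simp
qed simp

lemma N2sq_ge:
  assumes "0 < v" "1 \<le> p" shows "p \<le> N2sq p v"
proof -
  have "0 < 1 / v" using assms(1) by simp
  then have "max (1 / v) v \<le> 1 / v + v"
    using assms(1) by (intro max.boundedI) linarith+
  with one_le_max_inverse[OF assms(1)] have "1 \<le> 1 / v + v" by linarith
  have "p \<le> 1 * p^2" using assms(2) by (simp add: power2_eq_square)
  also have "\<dots> \<le> (2 * pi) * p^2" using pi_gt3 by (intro mult_right_mono) auto
  also have "\<dots> \<le> 2 * pi * p^2 * (1 / v + v)"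
    using mult_left_mono[OF \<open>1 \<le> 1 / v + v\<close>, of "2 * pi * p^2"] by simp
  finally show ?thesis by (simp add: N2sq_def)
qed

lemma N0_ge:
  assumes "0 < v" "0 \<le> p" shows "p \<le> N0 p v"
  using one_le_max_inverse[OF assms(1)] assms(2) mult_left_mono[of 1 "max (1 / v) v" p]
  by (simp add: N0_def)

lemma tdom_ereal: "tdom (ereal c) = {0..<c}"
  by (auto simp: tdom_def)

lemma atLeastAtMost_subset_tdom: "0 \<le> a \<Longrightarrow> b \<in> tdom T \<Longrightarrow> {a..b} \<subseteq> tdom T"
  by (auto simp: tdom_def) (meson ereal_less_eq(3) le_less_trans)

lemma at_within_tdom:
  assumes "0 < t" "ereal t < T" shows "at t within tdom T = at t"
proof (rule at_within_interior)
  show "t \<in> interior (tdom T)"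
  proof (cases T)
    case (real r)
    then have "{0<..<r} \<subseteq> tdom T" "t \<in> {0<..<r}" using assms by (auto simp: tdom_def)
    then show ?thesis by (meson interiorI open_greaterThanLessThan)
  next
    case PInf
    then have "{0<..} \<subseteq> tdom T" "t \<in> {0<..}" using assms by (auto simp: tdom_def)
    then show ?thesis by (meson interiorI open_greaterThan)
  qed (use assms in simp)
qed

lemma level_p_along_reduced_solution:
  fixes w :: "real \<Rightarrow> real"
  assumes "w t \<noteq> 0"
    and "(w has_real_derivative - level_p c (w t) * (1 + (w t)^2) / 4) (at t within S)"
  shows "((\<lambda>s. level_p c (w s)) has_real_derivative
      level_p c (w t) * (level_p c (w t) * R (w t) - 1)) (at t within S)"
proof -
  have "-4 * (level_p c (w t) * R (w t) - 1) / (1 + (w t)^2) * (- level_p c (w t) * (1 + (w t)^2) / 4)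
      = level_p c (w t) * (level_p c (w t) * R (w t) - 1)"
    using one_plus_square_pos[of "w t"] by (simp add: field_simps)
  then show ?thesis
    using DERIV_chain2[OF level_p_has_real_derivative[OF assms(1), of c] assms(2)] by simp
qed

lemma has_real_derivative_within_tdom_extend:
  assumes "(f has_real_derivative D) (at t within tdom (ereal c))" "0 \<le> t" "t < c" "c \<le> c'"
    and "\<And>s. 0 \<le> s \<Longrightarrow> s < c \<Longrightarrow> g s = f s"
  shows "(g has_real_derivative D) (at t within tdom (ereal c'))"
proof -
  have "at t within tdom (ereal c') = at t within tdom (ereal c)"
    using assms(3,4) by (intro at_within_nhd[of _ "{..<c}"]) (auto simp: tdom_ereal)
  with assms(1) have "(f has_real_derivative D) (at t within tdom (ereal c'))" by simp
  then show ?thesis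
  proof (rule has_field_derivative_transform_within[where d = "c - t"])
    show "0 < c - t" "t \<in> tdom (ereal c')" using assms(2-4) by (auto simp: tdom_ereal)
    show "f s = g s" if "s \<in> tdom (ereal c')" "dist s t < c - t" for s
      using that assms(5)[of s] by (simp add: tdom_ereal dist_real_def abs_less_iff)
  qed
qed

locale blowup =
  fixes p v :: "real \<Rightarrow> real" and T :: ereal and \<rho> :: real
  assumes maximal: "is_maximal_sol p v T"
    and v0: "0 < v 0" "v 0 < 1"
    and rho: "0 < \<rho>" "\<rho> < R (v 0)"
    and p0: "p 0 > 1 / (R (v 0) - \<rho>)"
begin

lemma sol: "is_sol p v T"
  using maximal by (simp add: is_maximal_sol_def)

lemma T_pos: "0 < T"
  using sol by (simp add: is_sol_def)

lemma solD:
  assumes "t \<in> tdom T"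
  shows "v t \<noteq> 0"
    and "(p has_real_derivative p t * (p t * R (v t) - 1)) (at t within tdom T)"
    and "(v has_real_derivative - (p t / 4) * (1 + (v t)^2)) (at t within tdom T)"
  using sol assms by (auto simp: is_sol_def)

lemma solD_at:
  assumes "0 < t" "t \<in> tdom T"
  shows "(p has_real_derivative p t * (p t * R (v t) - 1)) (at t)"
    and "(v has_real_derivative - (p t / 4) * (1 + (v t)^2)) (at t)"
  using solD[OF assms(2)] at_within_tdom[of t T] assms by (auto simp: tdom_def)

lemma continuous_on_p: "continuous_on (tdom T) p"
  using solD(2) by (meson DERIV_continuous continuous_on_eq_continuous_within)

lemma continuous_on_v: "continuous_on (tdom T) v"
  using solD(3) by (meson DERIV_continuous continuous_on_eq_continuous_within)

lemma p0_pos: "0 < p 0"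
proof -
  have "0 < 1 / (R (v 0) - \<rho>)" using rho by simp
  with p0 show ?thesis by linarith
qed

lemma inv_p0_less: "1 / p 0 < R (v 0) - \<rho>"
  using p0 rho p0_pos by (simp add: divide_less_eq mult.commute)

definition trapped :: "real \<Rightarrow> bool" where
  "trapped s \<longleftrightarrow> 0 < v s \<and> 0 < p s \<and> 1 / p s < R (v s) - \<rho>"

lemma trapped_deriv_signs:
  assumes "trapped s"
  shows "0 < p s * (p s * R (v s) - 1)" and "- (p s / 4) * (1 + (v s)^2) < 0"
proof -
  have ps: "0 < p s" and "1 / p s < R (v s)" using assms rho by (auto simp: trapped_def)
  then have "1 < p s * R (v s)" by (simp add: divide_less_eq mult.commute)
  with ps show "0 < p s * (p s * R (v s) - 1)" by simp
  show "- (p s / 4) * (1 + (v s)^2) < 0"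
    using ps one_plus_square_pos[of "v s"] by simp
qed

lemma strict_mono_while_trapped:
  assumes "0 \<le> s" "s < t" "t \<in> tdom T" and trapped: "\<And>x. s < x \<Longrightarrow> x < t \<Longrightarrow> trapped x"
  shows "p s < p t" and "v t < v s"
proof -
  have sub: "{s..t} \<subseteq> tdom T" using atLeastAtMost_subset_tdom assms by blast
  have x: "0 < x" "x \<in> tdom T" if "s < x" "x < t" for x using sub that assms(1) by auto
  show "p s < p t"
  proof (rule DERIV_pos_imp_increasing_open[OF assms(2)])
    fix x assume "s < x" "x < t"
    then show "\<exists>y. (p has_real_derivative y) (at x) \<and> 0 < y"
      using solD_at(1)[OF x] trapped_deriv_signs(1)[OF trapped] by blast
  qed (rule continuous_on_subset[OF continuous_on_p sub])
  show "v t < v s"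
  proof (rule DERIV_neg_imp_decreasing_open[OF assms(2)])
    fix x assume "s < x" "x < t"
    then show "\<exists>y. (v has_real_derivative y) (at x) \<and> y < 0"
      using solD_at(2)[OF x] trapped_deriv_signs(2)[OF trapped] by blast
  qed (rule continuous_on_subset[OF continuous_on_v sub])
qed

lemma trapped_closed:
  assumes m: "m \<in> tdom T" and below: "\<And>s. 0 \<le> s \<Longrightarrow> s < m \<Longrightarrow> trapped s"
  shows "trapped m"
proof (cases "m = 0")
  case True
  then show ?thesis using v0 p0_pos inv_p0_less by (simp add: trapped_def)
next
  case False
  with m have m0: "0 < m" by (simp add: tdom_def)
  have mono: "p 0 < p m" "v m < v 0"
    using strict_mono_while_trapped[OF _ m0 m] below by auto
  have "continuous_on {0..m} v"
    using continuous_on_subset[OF continuous_on_v atLeastAtMost_subset_tdom[OF _ m]] by simp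
  then have "(v \<longlongrightarrow> v m) (at_left m)" by (rule continuous_on_Icc_at_leftD[OF _ m0])
  moreover have "eventually (\<lambda>s. 0 \<le> v s) (at_left m)"
    using eventually_at_left_real[OF m0]
    by eventually_elim (use below in \<open>auto simp: trapped_def intro: less_imp_le\<close>)
  ultimately have "0 \<le> v m" by (rule tendsto_lowerbound) simp
  with solD(1)[OF m] have vm: "0 < v m" by linarith
  have "R (v 0) \<le> R (v m)" using R_antimono[OF vm] mono by simp
  moreover have "1 / p m \<le> 1 / p 0" using p0_pos mono by (simp add: frac_le)
  ultimately show ?thesis
    using vm mono p0_pos inv_p0_less by (simp add: trapped_def)
qed

lemma trapped_open:
  assumes m: "m \<in> tdom T" and "trapped m"
  shows "\<exists>d>0. \<forall>s\<in>tdom T. dist s m < d \<longrightarrow> trapped s"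
proof -
  have lv: "(v \<longlongrightarrow> v m) (at m within tdom T)" and lp: "(p \<longlongrightarrow> p m) (at m within tdom T)"
    using continuous_on_v continuous_on_p m by (auto simp: continuous_on_def)
  have vm: "0 < v m" and pm: "0 < p m" and gap: "0 < R (v m) - \<rho> - 1 / p m"
    using assms(2) by (auto simp: trapped_def)
  have "((\<lambda>s. R (v s) - \<rho> - 1 / p s) \<longlongrightarrow> R (v m) - \<rho> - 1 / p m) (at m within tdom T)"
    unfolding R_def using vm pm by (intro tendsto_intros lv lp) auto
  then have "eventually (\<lambda>s. 0 < R (v s) - \<rho> - 1 / p s) (at m within tdom T)"
    using gap by (rule order_tendstoD(1))
  moreover have "eventually (\<lambda>s. 0 < v s) (at m within tdom T)"
    using lv vm by (rule order_tendstoD(1))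
  moreover have "eventually (\<lambda>s. 0 < p s) (at m within tdom T)"
    using lp pm by (rule order_tendstoD(1))
  ultimately have "eventually trapped (at m within tdom T)"
    by eventually_elim (simp add: trapped_def)
  then obtain d where "d > 0" "\<And>s. s \<in> tdom T \<Longrightarrow> s \<noteq> m \<Longrightarrow> dist s m < d \<Longrightarrow> trapped s"
    by (auto simp: eventually_at)
  with assms(2) show ?thesis by blast
qed

lemma trapped: assumes "t \<in> tdom T" shows "trapped t"
proof (rule real_interval_induct[where P = trapped])
  show "0 \<le> t" using assms by (simp add: tdom_def)
  have sub: "s \<in> tdom T" if "0 \<le> s" "s \<le> t" for s
    using atLeastAtMost_subset_tdom[OF that(1) assms] that(2) by auto
  show "trapped m" if "0 \<le> m" "m \<le> t" "\<And>s. 0 \<le> s \<Longrightarrow> s < m \<Longrightarrow> trapped s" for m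
    using trapped_closed[OF sub] that by blast
  show "\<exists>d>0. \<forall>s. m < s \<and> s < m + d \<and> s \<le> t \<longrightarrow> trapped s"
    if m: "0 \<le> m" "m < t" "trapped m" for m
  proof -
    obtain d where "d > 0" "\<forall>s\<in>tdom T. dist s m < d \<longrightarrow> trapped s"
      using trapped_open[OF sub[OF m(1) less_imp_le[OF m(2)]] m(3)] by blast
    then show ?thesis
      using sub m(1) by (intro exI[of _ d]) (auto simp: dist_real_def)
  qed
qed

lemma v_pos: "t \<in> tdom T \<Longrightarrow> 0 < v t"
  and p_pos: "t \<in> tdom T \<Longrightarrow> 0 < p t"
  and inv_p_less: "t \<in> tdom T \<Longrightarrow> 1 / p t < R (v t) - \<rho>"
  using trapped by (auto simp: trapped_def)

lemma p_v_strict_mono: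
  assumes "0 \<le> s" "s < t" "t \<in> tdom T"
  shows "p s < p t" and "v t < v s"
proof -
  have "trapped x" if "s < x" "x < t" for x
    using atLeastAtMost_subset_tdom[OF assms(1,3)] that by (intro trapped) auto
  then show "p s < p t" "v t < v s"
    using strict_mono_while_trapped[OF assms] by auto
qed

lemma inv_p_decay:
  assumes t: "0 < t" "t \<in> tdom T" shows "\<rho> * t + 1 / p t < 1 / p 0"
proof -
  have sub: "{0..t} \<subseteq> tdom T" using atLeastAtMost_subset_tdom t by auto
  have "\<rho> * t + 1 / p t < \<rho> * 0 + 1 / p 0"
  proof (rule DERIV_neg_imp_decreasing_open[OF t(1)])
    fix s assume "0 < s" "s < t"
    with sub have s: "0 < s" "s \<in> tdom T" by auto
    have "((\<lambda>s. \<rho> * s + 1 / p s) has_real_derivative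
        \<rho> - p s * (p s * R (v s) - 1) / (p s)^2) (at s)"
      using p_pos[OF s(2)]
      by (auto intro!: derivative_eq_intros solD_at(1)[OF s] simp: power2_eq_square)
    moreover have "\<rho> - p s * (p s * R (v s) - 1) / (p s)^2 = \<rho> - (R (v s) - 1 / p s)"
      using p_pos[OF s(2)] by (simp add: field_simps power2_eq_square)
    ultimately show "\<exists>D. ((\<lambda>s. \<rho> * s + 1 / p s) has_real_derivative D) (at s) \<and> D < 0"
      using inv_p_less[OF s(2)] by auto
  next
    show "continuous_on {0..t} (\<lambda>s. \<rho> * s + 1 / p s)"
      using continuous_on_subset[OF continuous_on_p sub] p_pos sub
      by (intro continuous_intros) (auto simp: less_imp_neq[symmetric])
  qed
  then show ?thesis by simp
qed

lemma p_lower_bound: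
  assumes t: "0 < t" "t \<in> tdom T" shows "p 0 / (1 - \<rho> * p 0 * t) \<le> p t"
proof -
  have "1 / p t < 1 / p 0 - \<rho> * t" using inv_p_decay[OF t] by simp
  moreover have "0 < 1 / p t" using p_pos[OF t(2)] by simp
  ultimately have "0 < 1 / p 0 - \<rho> * t" by linarith
  have "p 0 / (1 - \<rho> * p 0 * t) = 1 / (1 / p 0 - \<rho> * t)"
    using p0_pos by (simp add: field_simps)
  also have "\<dots> \<le> 1 / (1 / p t)"
    using \<open>0 < 1 / p t\<close> \<open>0 < 1 / p 0 - \<rho> * t\<close> \<open>1 / p t < 1 / p 0 - \<rho> * t\<close>
    by (intro divide_left_mono) auto
  finally show ?thesis by simp
qed

lemma T_le: "T \<le> ereal (1 / (\<rho> * p 0))"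
proof (rule ccontr)
  define ts where "ts = 1 / (\<rho> * p 0)"
  assume "\<not> T \<le> ereal ts"
  moreover have "0 < ts" using rho p0_pos by (simp add: ts_def)
  ultimately have ts: "0 < ts" "ts \<in> tdom T" by (auto simp: tdom_def)
  have "\<rho> * ts = 1 / p 0" using rho p0_pos by (simp add: ts_def)
  then show False using inv_p_decay[OF ts] p_pos[OF ts(2)] by simp
qed

definition tc :: real where "tc = real_of_ereal T"

lemma T_eq: "T = ereal tc" and tc_pos: "0 < tc" and tc_le: "tc \<le> 1 / (\<rho> * p 0)"
proof -
  have "T = ereal tc \<and> 0 < tc \<and> tc \<le> 1 / (\<rho> * p 0)"
    using T_pos T_le unfolding tc_def by (cases T) auto
  then show "T = ereal tc" "0 < tc" "tc \<le> 1 / (\<rho> * p 0)" by auto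
qed

lemma tdom_eq: "tdom T = {0..<tc}"
  using arg_cong[OF T_eq, of tdom] by (simp add: tdom_ereal)

definition C0 :: real where "C0 = first_integral (p 0) (v 0)"

lemma first_integral_const:
  assumes t: "t \<in> tdom T" shows "first_integral (p t) (v t) = C0"
proof (cases "t = 0")
  case False
  with t have t0: "0 < t" by (simp add: tdom_def)
  have sub: "{0..t} \<subseteq> tdom T" using atLeastAtMost_subset_tdom[OF _ t] by simp
  have "first_integral (p t) (v t) = first_integral (p 0) (v 0)"
  proof (rule DERIV_isconst_end[OF t0, of "\<lambda>s. first_integral (p s) (v s)", simplified])
    have "((\<lambda>s. first_integral (p s) (v s)) has_real_derivative 0) (at x within tdom T)"
      if "x \<in> tdom T" for x
      using first_integral_deriv_zero[OF solD[OF that]] .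
    then have "continuous_on (tdom T) (\<lambda>s. first_integral (p s) (v s))"
      by (meson DERIV_continuous continuous_on_eq_continuous_within)
    then show "continuous_on {0..t} (\<lambda>s. first_integral (p s) (v s))"
      using sub by (rule continuous_on_subset)
    fix s assume "0 < s" "s < t"
    with sub have "0 < s" "s \<in> tdom T" by auto
    then show "((\<lambda>s. first_integral (p s) (v s)) has_real_derivative 0) (at s)"
      by (intro first_integral_deriv_zero solD(1) solD_at)
  qed
  then show ?thesis by (simp add: C0_def)
qed (simp add: C0_def)

lemma C0_pos: "0 < C0"
proof -
  have "R (v 0) < 1 / (2 * v 0)"
    using v0 unfolding R_def by (simp add: field_simps)
  then have "1 / p 0 < 1 / (2 * v 0)"
    using inv_p0_less rho by linarith
  then have "2 * v 0 < p 0"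
    using p0_pos v0 by (simp add: field_simps)
  then have "8 * v 0 ^ 3 / (1 + (v 0)^2)^2 < 4 * p 0 * (v 0)^2 / (1 + (v 0)^2)^2"
    using v0 one_plus_square_pos[of "v 0"]
    by (intro divide_strict_right_mono) (auto simp: power3_eq_cube power2_eq_square)
  then show ?thesis
    using kappa_less[OF v0] by (simp add: C0_def first_integral_def)
qed

lemma p_eq_level_p: "t \<in> tdom T \<Longrightarrow> p t = level_p C0 (v t)"
  using level_p_first_integral[OF solD(1)] first_integral_const by metis

definition v_inf :: real where "v_inf = Inf (v ` {0..<tc})"

lemma v_tendsto_v_inf: "(v \<longlongrightarrow> v_inf) (at_left tc)"
  unfolding v_inf_def
proof (rule antimono_tendsto_Inf_at_left[OF tc_pos])
  show "v t \<le> v s" if "0 \<le> s" "s \<le> t" "t < tc" for s t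
    using p_v_strict_mono(2)[of s t] that tdom_eq by (cases "s = t") auto
  show "bdd_below (v ` {0..<tc})"
    using v_pos tdom_eq by (auto intro!: bdd_belowI[of _ 0] less_imp_le)
qed

lemma v_inf_less: assumes "0 \<le> s" "s < tc" shows "v_inf < v s"
proof -
  define s' where "s' = (s + tc) / 2"
  have s': "s < s'" "s' < tc" using assms by (auto simp: s'_def)
  have "v_inf \<le> v s'"
    unfolding v_inf_def using s' assms v_pos tdom_eq
    by (intro cInf_lower) (auto intro!: bdd_belowI[of _ 0] less_imp_le)
  also have "\<dots> < v s" using p_v_strict_mono(2)[of s s'] s' assms tdom_eq by auto
  finally show ?thesis .
qed

lemma v_inf_nonneg: "0 \<le> v_inf"
  unfolding v_inf_def using tc_pos v_pos tdom_eq
  by (intro cInf_greatest) (auto intro: less_imp_le)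

lemma p_tendsto_if_v_inf_zero:
  assumes "v_inf = 0" shows "filterlim p at_top (at_left tc)"
proof -
  have near: "eventually (\<lambda>t. t \<in> tdom T) (at_left tc)"
    using eventually_at_left_real[OF tc_pos] by eventually_elim (auto simp: tdom_eq)
  have "((\<lambda>t. (v t)^2) \<longlongrightarrow> 0) (at_left tc)"
    using tendsto_power[OF v_tendsto_v_inf, of 2] assms by simp
  moreover have "eventually (\<lambda>t. (v t)^2 \<in> {0<..} \<and> (v t)^2 \<noteq> 0) (at_left tc)"
    using near
  proof eventually_elim
    case (elim t)
    then show ?case using v_pos[OF elim] by simp
  qed
  ultimately have "filterlim (\<lambda>t. (v t)^2) (at_right 0) (at_left tc)"
    by (simp add: filterlim_at)
  then have "filterlim (\<lambda>t. C0 / 4 * inverse ((v t)^2)) at_top (at_left tc)"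
    using C0_pos by (intro filterlim_tendsto_pos_mult_at_top[OF tendsto_const]
        filterlim_compose[OF filterlim_inverse_at_top_right]) auto
  moreover have "eventually (\<lambda>t. C0 / 4 * inverse ((v t)^2) \<le> p t) (at_left tc)"
    using near
  proof eventually_elim
    case (elim t)
    then show ?case
      using level_p_ge[OF less_imp_le[OF C0_pos] v_pos] p_eq_level_p
      by (simp add: field_simps)
  qed
  ultimately show ?thesis by (rule filterlim_at_top_mono)
qed

definition v_speed :: "real \<Rightarrow> real" where
  "v_speed x = level_p C0 x * (1 + x^2) / 4"

lemma v_speed_pos: "0 < x \<Longrightarrow> 0 < v_speed x"
  using level_p_pos[OF C0_pos] one_plus_square_pos[of x] by (simp add: v_speed_def)

lemma continuous_on_v_speed: "0 < a \<Longrightarrow> continuous_on {a..b} v_speed"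
  unfolding v_speed_def level_p_def
  by (intro continuous_intros continuous_at_imp_continuous_on ballI
      DERIV_isCont[OF kappa_has_real_derivative]) auto

lemma v_deriv_speed:
  "t \<in> tdom T \<Longrightarrow> (v has_real_derivative - v_speed (v t)) (at t within tdom T)"
  using solD(3) p_eq_level_p by (simp add: v_speed_def)

lemma v_deriv_speed_at:
  "0 < t \<Longrightarrow> t \<in> tdom T \<Longrightarrow> (v has_real_derivative - v_speed (v t)) (at t)"
  using solD_at(2) p_eq_level_p by (simp add: v_speed_def)

text \<open>Phi is a time function for the reduced equation v' = - v_speed v, i.e. Phi (v t) + t is
  constant. Its base point lies below v_inf, so that when v_inf > 0 its inverse continues v
  beyond tc.\<close>

definition Phi :: "real \<Rightarrow> real" where
  "Phi x = integral {v_inf / 2..x} (\<lambda>y. inverse (v_speed y))"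

definition v_ext :: "real \<Rightarrow> real" where
  "v_ext t = (if t < tc then v t else inv_into {v_inf / 2<..<v 0} Phi (Phi (v 0) - t))"

definition t_ext :: real where
  "t_ext = tc + (Phi v_inf - Phi (v_inf / 2))"

context
  assumes v_inf_pos: "0 < v_inf"
begin

lemma v_inf_bounds: "v_inf / 2 < v_inf" "v_inf < v 0"
  using v_inf_pos v_inf_less[of 0] tc_pos by auto

lemma continuous_on_inverse_v_speed: "continuous_on {v_inf / 2..v 0} (\<lambda>y. inverse (v_speed y))"
  using v_inf_pos v_speed_pos
  by (intro continuous_on_inverse continuous_on_v_speed) (auto simp: less_imp_neq[symmetric])

lemma Phi_continuous: "continuous_on {v_inf / 2..v 0} Phi"
  unfolding Phi_def
  by (rule indefinite_integral_continuous_1[OF integrable_continuous_real[OF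
          continuous_on_inverse_v_speed]])

lemma Phi_deriv: "x \<in> {v_inf / 2<..<v 0} \<Longrightarrow> (Phi has_real_derivative inverse (v_speed x)) (at x)"
  unfolding Phi_def by (rule integral_has_real_derivative_interior[OF continuous_on_inverse_v_speed])

lemma Phi_strict_mono: "strict_mono_on {v_inf / 2..v 0} Phi"
  unfolding Phi_def using v_inf_pos v_speed_pos
  by (intro strict_mono_on_integral[OF continuous_on_inverse_v_speed]) auto

lemma v_range_open:
  assumes "0 < t" "t < tc" shows "v t \<in> {v_inf / 2<..<v 0}"
proof -
  have "v_inf / 2 < v t" using v_inf_less[of t] v_inf_bounds assms by simp
  moreover have "v t < v 0" using p_v_strict_mono(2)[of 0 t] assms tdom_eq by simp
  ultimately show ?thesis by simp
qed

lemma v_range: "0 \<le> t \<Longrightarrow> t < tc \<Longrightarrow> v t \<in> {v_inf / 2..v 0}"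
  using v_range_open[of t] v_inf_bounds by (cases "t = 0") auto

lemma Phi_along_v:
  assumes "0 \<le> t" "t < tc" shows "Phi (v t) = Phi (v 0) - t"
proof (cases "t = 0")
  case False
  with assms have t: "0 < t" "t < tc" by auto
  have "(\<lambda>s. Phi (v s) + s) t = (\<lambda>s. Phi (v s) + s) 0"
  proof (rule DERIV_isconst_end[OF t(1)])
    have "continuous_on {0..t} v"
      using t by (intro continuous_on_subset[OF continuous_on_v]) (auto simp: tdom_eq)
    then have "continuous_on {0..t} (\<lambda>s. Phi (v s))"
    proof (rule continuous_on_compose2[OF Phi_continuous])
      show "v ` {0..t} \<subseteq> {v_inf / 2..v 0}"
        using t v_range by (simp add: image_subset_iff)
    qed
    then show "continuous_on {0..t} (\<lambda>s. Phi (v s) + s)"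
      by (rule continuous_on_add[OF _ continuous_on_id])
  next
    fix s assume s: "0 < s" "s < t"
    then have sT: "s \<in> tdom T" and vs: "v s \<in> {v_inf / 2<..<v 0}"
      using t tdom_eq v_range_open[of s] by auto
    have "inverse (v_speed (v s)) * - v_speed (v s) = -1"
      using v_speed_pos[of "v s"] v_inf_pos vs by simp
    then have "((\<lambda>s. Phi (v s)) has_real_derivative -1) (at s)"
      using DERIV_chain2[OF Phi_deriv[OF vs] v_deriv_speed_at[OF s(1) sT]] by simp
    from DERIV_add[OF this DERIV_ident]
    show "((\<lambda>s. Phi (v s) + s) has_real_derivative 0) (at s)" by simp
  qed
  then show ?thesis by simp
qed simp

lemma Phi_v_inf: "Phi v_inf = Phi (v 0) - tc"
proof -
  have "isCont Phi v_inf"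
    using v_inf_bounds by (intro DERIV_isCont[OF Phi_deriv]) auto
  then have "((\<lambda>t. Phi (v t)) \<longlongrightarrow> Phi v_inf) (at_left tc)"
    by (rule isCont_tendsto_compose[OF _ v_tendsto_v_inf])
  moreover have "((\<lambda>t. Phi (v t)) \<longlongrightarrow> Phi (v 0) - tc) (at_left tc)"
  proof (rule Lim_transform_eventually[OF tendsto_diff[OF tendsto_const tendsto_ident_at]])
    show "eventually (\<lambda>t. Phi (v 0) - t = Phi (v t)) (at_left tc)"
      using eventually_at_left_real[OF tc_pos]
    proof eventually_elim
      case (elim t)
      then show ?case using Phi_along_v[of t] by simp
    qed
  qed
  ultimately show ?thesis by (rule tendsto_unique[OF trivial_limit_at_left_real])
qed

lemma tc_less_t_ext: "tc < t_ext"
  using strict_mono_onD[OF Phi_strict_mono, of "v_inf / 2" v_inf] v_inf_bounds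
  by (simp add: t_ext_def)

lemma Phi_orbit_range:
  assumes "0 < t" "t < t_ext" shows "Phi (v 0) - t \<in> {Phi (v_inf / 2)<..<Phi (v 0)}"
  using assms Phi_v_inf by (simp add: t_ext_def)

lemma inv_into_Phi:
  assumes "y \<in> {Phi (v_inf / 2)<..<Phi (v 0)}"
  shows "inv_into {v_inf / 2<..<v 0} Phi y \<in> {v_inf / 2<..<v 0}"
    and "Phi (inv_into {v_inf / 2<..<v 0} Phi y) = y"
    and "(inv_into {v_inf / 2<..<v 0} Phi has_real_derivative
          v_speed (inv_into {v_inf / 2<..<v 0} Phi y)) (at y)"
proof -
  have le: "v_inf / 2 \<le> v 0" using v_inf_bounds by simp
  have nz: "inverse (v_speed x) \<noteq> 0" if "x \<in> {v_inf / 2<..<v 0}" for x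
    using that v_inf_pos v_speed_pos[of x] by simp
  note hyps = le Phi_continuous Phi_strict_mono Phi_deriv nz assms
  show "inv_into {v_inf / 2<..<v 0} Phi y \<in> {v_inf / 2<..<v 0}"
    by (rule inv_into_has_real_derivative(1)[OF hyps])
  show "Phi (inv_into {v_inf / 2<..<v 0} Phi y) = y"
    by (rule inv_into_has_real_derivative(2)[OF hyps])
  show "(inv_into {v_inf / 2<..<v 0} Phi has_real_derivative
      v_speed (inv_into {v_inf / 2<..<v 0} Phi y)) (at y)"
    using inv_into_has_real_derivative(3)[OF hyps] by simp
qed

lemma v_ext_eq:
  assumes "0 < t" "t < t_ext"
  shows "v_ext t = inv_into {v_inf / 2<..<v 0} Phi (Phi (v 0) - t)"
proof (cases "t < tc")
  case True
  have "inj_on Phi {v_inf / 2<..<v 0}"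
    by (rule strict_mono_on_imp_inj_on[OF monotone_on_subset[OF Phi_strict_mono]]) auto
  then show ?thesis
    using True assms v_range_open[of t] Phi_along_v[of t, symmetric] by (simp add: v_ext_def)
qed (simp add: v_ext_def)

lemma v_ext_deriv_at:
  assumes "0 < t" "t < t_ext"
  shows "(v_ext has_real_derivative - v_speed (v_ext t)) (at t)"
proof -
  define w where "w = (\<lambda>s. inv_into {v_inf / 2<..<v 0} Phi (Phi (v 0) - s))"
  have "((\<lambda>s. Phi (v 0) - s) has_real_derivative - 1) (at t)"
    by (rule derivative_eq_intros refl)+ simp
  from DERIV_chain2[OF inv_into_Phi(3)[OF Phi_orbit_range[OF assms]] this]
  have dw: "(w has_real_derivative - v_speed (v_ext t)) (at t)"
    by (simp add: w_def v_ext_eq[OF assms])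
  have eq: "w s = v_ext s" if "s \<in> {0<..<t_ext}" for s
    using v_ext_eq[of s] that by (simp add: w_def)
  have "t \<in> {0<..<t_ext}" using assms by simp
  from has_field_derivative_transform_within_open[OF dw open_greaterThanLessThan this eq]
  show ?thesis .
qed

lemma v_ext_pos: assumes "t \<in> tdom (ereal t_ext)" shows "0 < v_ext t"
proof (cases "t < tc")
  case True
  with assms have "t \<in> tdom T" by (simp add: tdom_ereal tdom_eq)
  with True show ?thesis using v_pos[of t] by (simp add: v_ext_def)
next
  case False
  with assms tc_pos have "0 < t" "t < t_ext" by (auto simp: tdom_ereal)
  with v_ext_eq inv_into_Phi(1)[OF Phi_orbit_range]
  have "v_ext t \<in> {v_inf / 2<..<v 0}" by simp
  then show ?thesis using v_inf_pos by simp
qed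

lemma v_ext_deriv:
  assumes t: "t \<in> tdom (ereal t_ext)"
  shows "(v_ext has_real_derivative - v_speed (v_ext t)) (at t within tdom (ereal t_ext))"
proof (cases "t < tc")
  case True
  with t have tT: "t \<in> tdom T" by (simp add: tdom_ereal tdom_eq)
  have "tdom T = tdom (ereal tc)" by (simp add: tdom_eq tdom_ereal)
  with v_deriv_speed[OF tT] True
  have "(v has_real_derivative - v_speed (v_ext t)) (at t within tdom (ereal tc))"
    by (simp add: v_ext_def)
  moreover have "0 \<le> t" using t by (simp add: tdom_ereal)
  ultimately show ?thesis
    using True less_imp_le[OF tc_less_t_ext]
    by (rule has_real_derivative_within_tdom_extend) (simp add: v_ext_def)
next
  case False
  with t tc_pos have "0 < t" "t < t_ext" by (auto simp: tdom_ereal)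
  then show ?thesis
    by (rule has_field_derivative_at_within[OF v_ext_deriv_at])
qed

lemma extension_is_sol: "is_sol (\<lambda>t. level_p C0 (v_ext t)) v_ext (ereal t_ext)"
  unfolding is_sol_def
proof (intro conjI ballI)
  show "0 < ereal t_ext" using tc_pos tc_less_t_ext by simp
  fix t assume t: "t \<in> tdom (ereal t_ext)"
  have dv: "(v_ext has_real_derivative - (level_p C0 (v_ext t) / 4) * (1 + (v_ext t)^2))
      (at t within tdom (ereal t_ext))"
    using v_ext_deriv[OF t] by (simp add: v_speed_def)
  show "v_ext t \<noteq> 0" using v_ext_pos[OF t] by simp
  show "(v_ext has_real_derivative - (level_p C0 (v_ext t) / 4) * (1 + (v_ext t)^2))
      (at t within tdom (ereal t_ext))" by (fact dv)
  show "((\<lambda>t. level_p C0 (v_ext t)) has_real_derivative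
      level_p C0 (v_ext t) * (level_p C0 (v_ext t) * R (v_ext t) - 1)) (at t within tdom (ereal t_ext))"
    using v_ext_pos[OF t] dv by (intro level_p_along_reduced_solution) simp_all
qed

lemma v_inf_pos_absurd: False
proof -
  have "\<forall>t\<in>tdom T. level_p C0 (v_ext t) = p t \<and> v_ext t = v t"
    using p_eq_level_p by (simp add: v_ext_def tdom_eq)
  then have "ereal t_ext \<le> T"
    using maximal extension_is_sol unfolding is_maximal_sol_def by blast
  then have "ereal t_ext \<le> ereal tc" by (rule ord_le_eq_trans[OF _ T_eq])
  then show False using tc_less_t_ext by simp
qed

end

lemma v_inf_eq_0: "v_inf = 0"
  using v_inf_nonneg v_inf_pos_absurd by fastforce

lemma p_tendsto_at_top: "filterlim p at_top (at_left tc)"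
  using p_tendsto_if_v_inf_zero[OF v_inf_eq_0] .

lemma solution_bounds:
  assumes "0 < t" "ereal t < T"
  shows "v t < v 0" and "1 / (R (v t) - \<rho>) < p t" and "p 0 / (1 - \<rho> * p 0 * t) \<le> p t"
proof -
  have t: "t \<in> tdom T" using assms by (simp add: tdom_def)
  show "v t < v 0" using p_v_strict_mono(2)[OF _ assms(1) t] by simp
  have "0 < 1 / p t" using p_pos[OF t] by simp
  with inv_p_less[OF t] have "0 < R (v t) - \<rho>" by linarith
  with inv_p_less[OF t] p_pos[OF t] show "1 / (R (v t) - \<rho>) < p t"
    by (simp add: field_simps)
  show "p 0 / (1 - \<rho> * p 0 * t) \<le> p t" by (rule p_lower_bound[OF assms(1) t])
qed

lemma eventually_near_tc: "eventually (\<lambda>t. 0 < v t \<and> 1 \<le> p t) (at_left tc)"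
proof -
  have "eventually (\<lambda>t. 1 \<le> p t) (at_left tc)"
    using p_tendsto_at_top by (simp add: filterlim_at_top)
  moreover have "eventually (\<lambda>t. t \<in> tdom T) (at_left tc)"
    using eventually_at_left_real[OF tc_pos] by eventually_elim (simp add: tdom_eq)
  ultimately show ?thesis
    by eventually_elim (simp add: v_pos)
qed

lemma N2sq_tendsto_at_top: "filterlim (\<lambda>t. N2sq (p t) (v t)) at_top (at_left tc)"
  using eventually_near_tc
  by (intro filterlim_at_top_mono[OF p_tendsto_at_top]) (auto elim!: eventually_mono intro: N2sq_ge)

lemma N0_tendsto_at_top: "filterlim (\<lambda>t. N0 (p t) (v t)) at_top (at_left tc)"
  using eventually_near_tc
  by (intro filterlim_at_top_mono[OF p_tendsto_at_top]) (auto elim!: eventually_mono intro: N0_ge)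

end

theorem theoremA2:
  fixes p v :: "real \<Rightarrow> real" and T :: ereal and \<rho> :: real
  assumes sol: "is_maximal_sol p v T"
    and v0: "0 < v 0" "v 0 < 1"
    and rho: "0 < \<rho>" "\<rho> < R (v 0)"
    and p0: "p 0 > 1 / (R (v 0) - \<rho>)"
  shows "(\<forall>t. 0 < t \<and> ereal t < T \<longrightarrow>
            v t < v 0 \<and> p t > 1 / (R (v t) - \<rho>) \<and>
            p t \<ge> p 0 / (1 - \<rho> * p 0 * t))
       \<and> (\<exists>tc. T = ereal tc \<and> tc \<le> 1 / (\<rho> * p 0) \<and>
            filterlim p at_top (at_left tc) \<and>
            filterlim (\<lambda>t. N2sq (p t) (v t)) at_top (at_left tc) \<and>
            filterlim (\<lambda>t. N0 (p t) (v t)) at_top (at_left tc))"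
proof -
  interpret blowup p v T \<rho> using assms by unfold_locales
  show ?thesis
    using solution_bounds T_eq tc_le p_tendsto_at_top N2sq_tendsto_at_top N0_tendsto_at_top
    by blast
qed

end
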